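(* For all real numbers $t\ge1$, $s\ge e$, $c\in(0,1]$ and $0<\omega\le\delta\le e^{-e}$, $$\frac1t\ln\Big(\frac{\ln(2t)}{\omega}\Big)\ge\frac cs\ln\Big(\frac{\ln s}{\delta}\Big)\ \Longrightarrow\ t\le\frac sc\cdot\frac{\ln(2/\omega)+\ln\ln(1/(c\omega))}{\ln(1/\delta)}.$$ *)

theory Defs
  imports Complex_Main
begin

end

theory Submission
  imports Defs
begin

text \<open>In logarithmic coordinates \<open>u = ln (1/\<omega>)\<close>, \<open>L = ln (1/\<delta>)\<close>, \<open>a = ln s\<close>,
  \<open>b = ln (1/c)\<close>, \<open>y = ln (2t)\<close> the hypothesis reads
  \<open>t \<le> (s/c) (ln y + u) / (ln a + L)\<close>. Dropping \<open>ln a\<close> from the denominator and taking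
  logarithms gives \<open>y \<le> a + b + ln (2 (ln y + u) / L)\<close>, which forces \<open>y \<le> 2 (u + b) a\<close>,
  since otherwise each of \<open>a + b\<close>, \<open>u\<close> and \<open>ln y\<close> is below \<open>y/2\<close>. Hence
  \<open>ln y \<le> ln 2 + ln (u + b) + ln a\<close>, and the term \<open>ln a\<close> now appearing in numerator and
  denominator alike can be removed because \<open>ln 2 + u + ln (u + b) \<ge> L\<close>.\<close>

lemma ln_less_half: "0 < (y::real) \<Longrightarrow> ln y < y / 2"
proof -
  assume y: "y > 0"
  have "ln (y / 2) \<le> y / 2 - 1" using ln_le_minus_one[of "y / 2"] y by simp
  hence "ln y - ln 2 \<le> y / 2 - 1" using y by (simp add: ln_div)
  thus ?thesis using ln_2_less_1 by linarith
qed

lemma add_divide_add_le_divide: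
  fixes R L x :: real
  assumes "0 < L" and "L \<le> R" and "0 \<le> x"
  shows "(R + x) / (L + x) \<le> R / L"
proof -
  have "(R + x) * L \<le> R * (L + x)" using assms by (simp add: algebra_simps mult_right_mono)
  thus ?thesis using assms by (simp add: divide_simps)
qed

lemma linear_bound_of_log_bound:
  fixes y u a b L :: real
  assumes "0 < y" and "1 \<le> u" and "1 \<le> a" and "0 \<le> b" and "2 \<le> L"
    and "0 < ln y + u"
    and "y \<le> a + b + ln (2 * (ln y + u) / L)"
  shows "y \<le> 2 * (u + b) * a"
proof (rule ccontr)
  assume "\<not> ?thesis"
  hence big: "2 * (u * a + b * a) < y" by (simp add: algebra_simps)
  have "u \<le> u * a" "a \<le> u * a" "b \<le> b * a"
    using assms mult_left_mono[of 1 a u] mult_right_mono[of 1 u a] mult_left_mono[of 1 a b]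
    by auto
  hence "a + b < y / 2" "u < y / 2" using big assms(4) by auto
  moreover have "ln y < y / 2" using ln_less_half assms(1) .
  moreover have "ln (2 * (ln y + u) / L) \<le> ln y"
  proof (rule ln_mono)
    have "2 * (ln y + u) \<le> L * (ln y + u)" using assms(5,6) by (intro mult_right_mono) auto
    hence "2 * (ln y + u) / L \<le> ln y + u" using assms(5) by (simp add: divide_le_eq mult.commute)
    thus "2 * (ln y + u) / L \<le> y" using calculation by linarith
  qed (use assms in auto)
  ultimately show False using assms(7) by linarith
qed

lemma bound_in_log_coordinates:
  fixes t s c u L :: real
  assumes "1 \<le> t" and "exp 1 \<le> s" and "0 < c" and "c \<le> 1" and "2 \<le> L" and "L \<le> u"
    and hyp: "(c / s) * (ln (ln s) + L) \<le> (1 / t) * (ln (ln (2 * t)) + u)"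
  shows "t \<le> (s / c) * ((ln 2 + u + ln (u + ln (1 / c))) / L)"
proof -
  define a b y where "a = ln s" and "b = ln (1 / c)" and "y = ln (2 * t)"
  define N D R where "N = ln y + u" and "D = L + ln a" and "R = ln 2 + u + ln (u + b)"
  have s: "0 < s" using assms(2) exp_gt_zero[of 1] by linarith
  have a: "1 \<le> a" unfolding a_def using assms(2) s by (metis exp_gt_zero ln_exp ln_le_cancel_iff)
  have b: "0 \<le> b" unfolding b_def using assms(3,4) by simp
  have y: "0 < y" unfolding y_def using assms(1) by simp
  have D: "L \<le> D" unfolding D_def using a by simp
  have "c * D * t \<le> s * N"
    using hyp assms(1,3) s unfolding N_def D_def a_def y_def by (simp add: field_simps)
  moreover have "0 < c * D * t" using assms(1,3,5) D by simp
  ultimately have "0 < s * N" by linarith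
  hence N: "0 < N" using s zero_less_mult_pos by blast
  have t_ND: "t \<le> (s / c) * (N / D)"
    using \<open>c * D * t \<le> s * N\<close> assms(3,5) D by (simp add: field_simps)
  have "N / D \<le> N / L" using D N assms(5) by (intro divide_left_mono) auto
  hence "t \<le> (s / c) * (N / L)"
    using t_ND s assms(3) by (meson less_eq_real_def mult_left_mono order.trans zero_le_divide_iff)
  hence "y \<le> ln (2 * ((s / c) * (N / L)))" unfolding y_def using assms(1) by simp
  also have "\<dots> = a + b + ln (2 * N / L)"
    using s assms(3,5) N unfolding a_def b_def by (simp add: ln_mult ln_div)
  finally have "y \<le> 2 * (u + b) * a"
    using linear_bound_of_log_bound y assms(5,6) a b N unfolding N_def by simp
  hence "ln y \<le> ln (2 * (u + b) * a)" using y by simp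
  also have "\<dots> = ln 2 + ln (u + b) + ln a"
    using a b assms(5,6) by (simp add: ln_mult del: distrib_left_numeral)
  finally have "N \<le> R + ln a" unfolding N_def R_def by simp
  hence "N / D \<le> (R + ln a) / D" using D assms(5) by (intro divide_right_mono) auto
  also have "\<dots> \<le> R / L"
  proof -
    have "0 \<le> ln (u + b)" "0 \<le> ln (2::real)" using assms(5,6) b by simp_all
    hence "L \<le> R" unfolding R_def using assms(6) by linarith
    thus ?thesis unfolding D_def using assms(5) a by (intro add_divide_add_le_divide) auto
  qed
  finally have "(s / c) * (N / D) \<le> (s / c) * (R / L)"
    using s assms(3) by (intro mult_left_mono) auto
  thus ?thesis using t_ND unfolding R_def b_def by linarith
qed

theorem lemma6:
  fixes t s c \<omega> \<delta> :: real
  assumes "t \<ge> 1" and "s \<ge> exp 1" and "0 < c" and "c \<le> 1"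
    and "0 < \<omega>" and "\<omega> \<le> \<delta>" and "\<delta> \<le> exp (- exp 1)"
    and "(1 / t) * ln (ln (2 * t) / \<omega>) \<ge> (c / s) * ln (ln s / \<delta>)"
  shows "t \<le> (s / c) * ((ln (2 / \<omega>) + ln (ln (1 / (c * \<omega>)))) / ln (1 / \<delta>))"
proof -
  define u L where "u = ln (1 / \<omega>)" and "L = ln (1 / \<delta>)"
  have \<delta>: "0 < \<delta>" using assms(5,6) by linarith
  have "ln \<delta> \<le> - exp 1" using assms(7) \<delta> by (metis ln_exp ln_le_cancel_iff exp_gt_zero)
  hence "exp 1 \<le> L" unfolding L_def using \<delta> by (simp add: ln_div)
  hence L: "2 \<le> L" using exp_ge_add_one_self[of 1] by linarith
  have uL: "L \<le> u" unfolding u_def L_def using assms(5,6) \<delta> by (simp add: ln_div)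
  have "0 < ln s" using assms(2) by (metis exp_gt_zero ln_exp ln_less_cancel_iff less_le_trans zero_less_one)
  moreover have "0 < ln (2 * t)" using assms(1) by simp
  ultimately have "ln (ln s / \<delta>) = ln (ln s) + L" and "ln (ln (2 * t) / \<omega>) = ln (ln (2 * t)) + u"
    unfolding u_def L_def using \<delta> assms(5) by (simp_all add: ln_div)
  hence "(c / s) * (ln (ln s) + L) \<le> (1 / t) * (ln (ln (2 * t)) + u)" using assms(8) by simp
  moreover have "ln (2 / \<omega>) = ln 2 + u" and "ln (1 / (c * \<omega>)) = u + ln (1 / c)"
    unfolding u_def using assms(3,5) by (simp_all add: ln_div ln_mult)
  ultimately show ?thesis
    using bound_in_log_coordinates[OF assms(1-4) L uL] unfolding L_def by simp
qed

end
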